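(* Let $p>2$ and $L>L_f$. Assume that $\nabla f$ is completely continuous from $L^2(\Omega)$ to $L^p(\Omega)$ (weakly convergent sequences in $L^2(\Omega)$ are mapped to strongly convergent sequences in $L^p(\Omega)$). Let $(u_k)$ be generated by the IHT method with parameter $L$, assume $(u_k)$ is bounded in $L^p(\Omega)$, let $\chi$ be the $L^1(\Omega)$-limit of $(\chi_k)$, and let $u^*\in U_{ad}$ be a weak sequential limit point of $(u_k)$ in $L^2(\Omega)$. Then for every $u\in U_{ad}\cap L^p(\Omega)$, $$\big(\nabla f(u^* )+\alpha u^*\big)(u-u^* )\chi\ge0\quad\text{a.e. in }\Omega.$$
   Context: Let $\Omega\subset\mathbb R^n$ be a bounded open set with Lebesgue measure. Fix $\alpha\ge0$, $\beta>0$, $b\in(0,+\infty]$ and set $U_{ad}:=\{v\in L^2(\Omega): |v(x)|\le b\text{ a.e. in }\Omega\}$. For $t\in\mathbb R$ let $|t|_0:=0$ if $t=0$ and $|t|_0:=1$ if $t\ne0$; for measurable $u$ let $\|u\|_0:=\operatorname{meas}\{x\in\Omega:u(x)\ne0\}$. Define $g(u):=\frac\alpha2\|u\|_{L^2(\Omega)}^2+\beta\|u\|_0$. The function $f:L^2(\Omega)\to\mathbb R$ is weakly lower semicontinuous, bounded from below and Fréchet differentiable; $\nabla f(u)\in L^2(\Omega)$ is the Riesz representative of its derivative, and $\nabla f$ is Lipschitz continuous on $L^2(\Omega)$ with constant $L_f$. IHT method: given $L>0$ and $u_0\in U_{ad}$, for $k=0,1,\dots$ let $u_{k+1}$ be a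 global solution of $\min_{u\in U_{ad}} f(u_k)+\int_\Omega\nabla f(u_k)(u-u_k)\,dx+\frac L2\|u-u_k\|_{L^2(\Omega)}^2+g(u)$ (a solution exists). Let $\chi_k$ denote the characteristic function of $\{x\in\Omega:u_k(x)\ne0\}$; for $L>L_f$ the sequence $(\chi_k)$ converges in $L^1(\Omega)$ to a characteristic function $\chi$. *)

theory Defs
  imports "HOL-Analysis.Analysis"
begin

text \<open>Functions on \<Omega> are represented by real-valued functions on the ambient
Euclidean space; the measure is Lebesgue measure restricted to \<Omega>.\<close>

definition L2 :: "'a::euclidean_space set \<Rightarrow> ('a \<Rightarrow> real) set" where
  "L2 \<Omega> = {u. u \<in> borel_measurable (lebesgue_on \<Omega>) \<and>
               integrable (lebesgue_on \<Omega>) (\<lambda>x. (u x)\<^sup>2)}"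

definition Lp :: "real \<Rightarrow> 'a::euclidean_space set \<Rightarrow> ('a \<Rightarrow> real) set" where
  "Lp p \<Omega> = {u. u \<in> borel_measurable (lebesgue_on \<Omega>) \<and>
               integrable (lebesgue_on \<Omega>) (\<lambda>x. \<bar>u x\<bar> powr p)}"

definition norm2 :: "'a::euclidean_space set \<Rightarrow> ('a \<Rightarrow> real) \<Rightarrow> real" where
  "norm2 \<Omega> u = sqrt (\<integral>x. (u x)\<^sup>2 \<partial>(lebesgue_on \<Omega>))"

definition normp :: "real \<Rightarrow> 'a::euclidean_space set \<Rightarrow> ('a \<Rightarrow> real) \<Rightarrow> real" where
  "normp p \<Omega> u = (\<integral>x. \<bar>u x\<bar> powr p \<partial>(lebesgue_on \<Omega>)) powr (1 / p)"

definition inner2 :: "'a::euclidean_space set \<Rightarrow> ('a \<Rightarrow> real) \<Rightarrow> ('a \<Rightarrow> real) \<Rightarrow> real" where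
  "inner2 \<Omega> u v = (\<integral>x. u x * v x \<partial>(lebesgue_on \<Omega>))"

definition l0 :: "'a::euclidean_space set \<Rightarrow> ('a \<Rightarrow> real) \<Rightarrow> real" where
  "l0 \<Omega> u = measure (lebesgue_on \<Omega>) {x\<in>\<Omega>. u x \<noteq> 0}"

definition Uad :: "'a::euclidean_space set \<Rightarrow> ereal \<Rightarrow> ('a \<Rightarrow> real) set" where
  "Uad \<Omega> b = {v \<in> L2 \<Omega>. AE x in lebesgue_on \<Omega>. ereal \<bar>v x\<bar> \<le> b}"

definition gfun :: "real \<Rightarrow> real \<Rightarrow> 'a::euclidean_space set \<Rightarrow> ('a \<Rightarrow> real) \<Rightarrow> real" where
  "gfun \<alpha> \<beta> \<Omega> u = \<alpha> / 2 * (norm2 \<Omega> u)\<^sup>2 + \<beta> * l0 \<Omega> u"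

definition weak_conv_L2 :: "'a::euclidean_space set \<Rightarrow> (nat \<Rightarrow> 'a \<Rightarrow> real) \<Rightarrow> ('a \<Rightarrow> real) \<Rightarrow> bool" where
  "weak_conv_L2 \<Omega> v w \<longleftrightarrow> (\<forall>k. v k \<in> L2 \<Omega>) \<and> w \<in> L2 \<Omega> \<and>
     (\<forall>z\<in>L2 \<Omega>. (\<lambda>k. inner2 \<Omega> (v k) z) \<longlonglongrightarrow> inner2 \<Omega> w z)"

definition standing_f ::
  "'a::euclidean_space set \<Rightarrow> (('a \<Rightarrow> real) \<Rightarrow> real) \<Rightarrow> (('a \<Rightarrow> real) \<Rightarrow> ('a \<Rightarrow> real)) \<Rightarrow> real \<Rightarrow> bool" where
  "standing_f \<Omega> f G Lf \<longleftrightarrow>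
     (\<forall>v w. weak_conv_L2 \<Omega> v w \<longrightarrow> ereal (f w) \<le> liminf (\<lambda>k. ereal (f (v k)))) \<and>
     (\<exists>c. \<forall>u\<in>L2 \<Omega>. c \<le> f u) \<and>
     (\<forall>u\<in>L2 \<Omega>. G u \<in> L2 \<Omega>) \<and>
     (\<forall>u\<in>L2 \<Omega>. \<forall>\<epsilon>>0. \<exists>\<delta>>0. \<forall>v\<in>L2 \<Omega>. norm2 \<Omega> (\<lambda>x. v x - u x) < \<delta> \<longrightarrow>
         \<bar>f v - f u - inner2 \<Omega> (G u) (\<lambda>x. v x - u x)\<bar> \<le> \<epsilon> * norm2 \<Omega> (\<lambda>x. v x - u x)) \<and>
     (\<forall>u\<in>L2 \<Omega>. \<forall>v\<in>L2 \<Omega>.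
         norm2 \<Omega> (\<lambda>x. G u x - G v x) \<le> Lf * norm2 \<Omega> (\<lambda>x. u x - v x))"

definition iht_obj ::
  "'a::euclidean_space set \<Rightarrow> (('a \<Rightarrow> real) \<Rightarrow> real) \<Rightarrow> (('a \<Rightarrow> real) \<Rightarrow> ('a \<Rightarrow> real)) \<Rightarrow>
   real \<Rightarrow> real \<Rightarrow> real \<Rightarrow> ('a \<Rightarrow> real) \<Rightarrow> ('a \<Rightarrow> real) \<Rightarrow> real" where
  "iht_obj \<Omega> f G \<alpha> \<beta> L uk u = f uk + inner2 \<Omega> (G uk) (\<lambda>x. u x - uk x)
      + L / 2 * (norm2 \<Omega> (\<lambda>x. u x - uk x))\<^sup>2 + gfun \<alpha> \<beta> \<Omega> u"

definition IHT_seq ::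
  "'a::euclidean_space set \<Rightarrow> ereal \<Rightarrow> (('a \<Rightarrow> real) \<Rightarrow> real) \<Rightarrow> (('a \<Rightarrow> real) \<Rightarrow> ('a \<Rightarrow> real)) \<Rightarrow>
   real \<Rightarrow> real \<Rightarrow> real \<Rightarrow> (nat \<Rightarrow> 'a \<Rightarrow> real) \<Rightarrow> bool" where
  "IHT_seq \<Omega> b f G \<alpha> \<beta> L u \<longleftrightarrow> u 0 \<in> Uad \<Omega> b \<and>
     (\<forall>k. u (Suc k) \<in> Uad \<Omega> b \<and>
          (\<forall>v\<in>Uad \<Omega> b. iht_obj \<Omega> f G \<alpha> \<beta> L (u k) (u (Suc k)) \<le> iht_obj \<Omega> f G \<alpha> \<beta> L (u k) v))"

definition chi :: "('a \<Rightarrow> real) \<Rightarrow> 'a \<Rightarrow> real" where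
  "chi u = indicator {x. u x \<noteq> 0}"

end

theory Submission
  imports Defs
begin

text \<open>Each iterate \<open>u\<^sub>k\<^sub>+\<^sub>1\<close> minimises the linearised IHT objective. Moving it towards
  \<open>v \<in> U\<^sub>a\<^sub>d\<close> by \<open>s \<psi> (v - u\<^sub>k\<^sub>+\<^sub>1)\<close>, with \<open>0 \<le> \<psi> \<le> 1\<close> vanishing off the support of
  \<open>u\<^sub>k\<^sub>+\<^sub>1\<close>, stays in \<open>U\<^sub>a\<^sub>d\<close> and does not enlarge the support, so the \<open>l\<^sub>0\<close> term cannot
  increase; letting \<open>s \<rightarrow> 0\<close> gives the tested optimality condition
  \<open>\<integral> \<psi> (\<nabla>f(u\<^sub>k) + L (u\<^sub>k\<^sub>+\<^sub>1 - u\<^sub>k) + \<alpha> u\<^sub>k\<^sub>+\<^sub>1) (v - u\<^sub>k\<^sub>+\<^sub>1) \<ge> 0\<close>.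

  The descent lemma gives sufficient decrease of \<open>f + g\<close>, hence \<open>\<parallel>u\<^sub>k\<^sub>+\<^sub>1 - u\<^sub>k\<parallel> \<rightarrow> 0\<close>, so along a
  subsequence both \<open>u\<^sub>k\<close> and \<open>u\<^sub>k\<^sub>+\<^sub>1\<close> converge weakly to \<open>u\<^sup>*\<close>, and \<open>\<chi>\<^sub>k\<^sub>+\<^sub>1 \<rightarrow> \<chi>\<close> almost
  everywhere. Complete continuity into \<open>L\<^sup>p\<close> with \<open>p > 2\<close> makes the gradient term converge strongly
  in \<open>L\<^sup>2\<close> on the bounded set \<open>\<Omega>\<close>, dominated convergence does the same for the cut-offs
  \<open>\<psi> = 1\<^sub>A \<chi>\<^sub>k\<^sub>+\<^sub>1\<close>, and passing to the limit gives
  \<open>\<integral>\<^sub>A (\<nabla>f(u\<^sup>*) + \<alpha> u\<^sup>*) (v - u\<^sup>*) \<chi> \<ge> 0\<close> for every measurable \<open>A\<close>.\<close>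

section \<open>Square-integrable functions\<close>

lemma finite_measure_lebesgue_on_bounded:
  fixes \<Omega> :: "'a::euclidean_space set"
  assumes "\<Omega> \<in> sets lebesgue" and "bounded \<Omega>"
  shows "finite_measure (lebesgue_on \<Omega>)"
  by (rule finite_measure_lebesgue_on[OF bounded_set_imp_lmeasurable[OF assms(2,1)]])

lemma L2_mult_integrable:
  assumes "u \<in> L2 \<Omega>" and "v \<in> L2 \<Omega>"
  shows "integrable (lebesgue_on \<Omega>) (\<lambda>x. u x * v x)"
proof (rule Bochner_Integration.integrable_bound)
  show "integrable (lebesgue_on \<Omega>) (\<lambda>x. ((u x)\<^sup>2 + (v x)\<^sup>2) / 2)"
    using assms unfolding L2_def by auto
  show "(\<lambda>x. u x * v x) \<in> borel_measurable (lebesgue_on \<Omega>)"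
    using assms unfolding L2_def by auto
  have "norm (u x * v x) \<le> norm (((u x)\<^sup>2 + (v x)\<^sup>2) / 2)" for x
    using zero_le_power2[of "\<bar>u x\<bar> - \<bar>v x\<bar>"] by (simp add: power2_eq_square abs_mult algebra_simps)
  then show "AE x in lebesgue_on \<Omega>. norm (u x * v x) \<le> norm (((u x)\<^sup>2 + (v x)\<^sup>2) / 2)"
    by simp
qed

lemma L2_lincomb:
  assumes "u \<in> L2 \<Omega>" and "v \<in> L2 \<Omega>"
  shows "(\<lambda>x. a * u x + b * v x) \<in> L2 \<Omega>"
proof -
  have "integrable (lebesgue_on \<Omega>) (\<lambda>x. a\<^sup>2 * (u x)\<^sup>2 + (2*a*b) * (u x * v x) + b\<^sup>2 * (v x)\<^sup>2)"
    using L2_mult_integrable[OF assms] assms unfolding L2_def by auto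
  moreover have "(\<lambda>x. a\<^sup>2 * (u x)\<^sup>2 + (2*a*b) * (u x * v x) + b\<^sup>2 * (v x)\<^sup>2) = (\<lambda>x. (a * u x + b * v x)\<^sup>2)"
    by (auto simp: power2_eq_square algebra_simps)
  ultimately show ?thesis using assms unfolding L2_def by auto
qed

lemma L2_add: "u \<in> L2 \<Omega> \<Longrightarrow> v \<in> L2 \<Omega> \<Longrightarrow> (\<lambda>x. u x + v x) \<in> L2 \<Omega>"
  using L2_lincomb[of u \<Omega> v 1 1] by simp

lemma L2_diff: "u \<in> L2 \<Omega> \<Longrightarrow> v \<in> L2 \<Omega> \<Longrightarrow> (\<lambda>x. u x - v x) \<in> L2 \<Omega>"
  using L2_lincomb[of u \<Omega> v 1 "-1"] by simp

lemma L2_scale: "u \<in> L2 \<Omega> \<Longrightarrow> (\<lambda>x. c * u x) \<in> L2 \<Omega>"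
  unfolding L2_def by (auto simp: power_mult_distrib)

lemma L2_mult_bounded:
  assumes "u \<in> L2 \<Omega>" and "\<psi> \<in> borel_measurable (lebesgue_on \<Omega>)"
    and "AE x in lebesgue_on \<Omega>. \<bar>\<psi> x\<bar> \<le> 1"
  shows "(\<lambda>x. \<psi> x * u x) \<in> L2 \<Omega>"
  unfolding L2_def
proof (intro CollectI conjI)
  show "(\<lambda>x. \<psi> x * u x) \<in> borel_measurable (lebesgue_on \<Omega>)"
    using assms unfolding L2_def by auto
  show "integrable (lebesgue_on \<Omega>) (\<lambda>x. (\<psi> x * u x)\<^sup>2)"
  proof (rule Bochner_Integration.integrable_bound)
    show "integrable (lebesgue_on \<Omega>) (\<lambda>x. (u x)\<^sup>2)"
      using assms unfolding L2_def by auto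
    show "(\<lambda>x. (\<psi> x * u x)\<^sup>2) \<in> borel_measurable (lebesgue_on \<Omega>)"
      using assms unfolding L2_def by auto
    show "AE x in lebesgue_on \<Omega>. norm ((\<psi> x * u x)\<^sup>2) \<le> norm ((u x)\<^sup>2)"
      using assms(3)
    proof eventually_elim
      case (elim x)
      then have "(\<psi> x)\<^sup>2 * (u x)\<^sup>2 \<le> 1 * (u x)\<^sup>2"
        by (intro mult_right_mono) (auto simp: abs_square_le_1)
      then show ?case by (simp add: power_mult_distrib)
    qed
  qed
qed

lemma norm2_nonneg: "norm2 \<Omega> u \<ge> 0"
  unfolding norm2_def by (simp add: integral_nonneg_AE)

lemma norm2_power2: "(norm2 \<Omega> u)\<^sup>2 = (\<integral>x. (u x)\<^sup>2 \<partial>lebesgue_on \<Omega>)"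
  unfolding norm2_def by (simp add: integral_nonneg_AE)

lemma norm2_scale: "norm2 \<Omega> (\<lambda>x. c * u x) = \<bar>c\<bar> * norm2 \<Omega> u"
  unfolding norm2_def by (simp add: power_mult_distrib real_sqrt_mult)

lemma norm2_mult_bounded_le:
  assumes "u \<in> L2 \<Omega>" and "\<psi> \<in> borel_measurable (lebesgue_on \<Omega>)"
    and "AE x in lebesgue_on \<Omega>. \<bar>\<psi> x\<bar> \<le> 1"
  shows "norm2 \<Omega> (\<lambda>x. \<psi> x * u x) \<le> norm2 \<Omega> u"
proof -
  have "(\<integral>x. (\<psi> x * u x)\<^sup>2 \<partial>lebesgue_on \<Omega>) \<le> (\<integral>x. (u x)\<^sup>2 \<partial>lebesgue_on \<Omega>)"
  proof (rule integral_mono_AE)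
    show "integrable (lebesgue_on \<Omega>) (\<lambda>x. (\<psi> x * u x)\<^sup>2)"
      using L2_mult_bounded[OF assms] unfolding L2_def by auto
    show "integrable (lebesgue_on \<Omega>) (\<lambda>x. (u x)\<^sup>2)"
      using assms unfolding L2_def by auto
    show "AE x in lebesgue_on \<Omega>. (\<psi> x * u x)\<^sup>2 \<le> (u x)\<^sup>2"
      using assms(3)
    proof eventually_elim
      case (elim x)
      then have "(\<psi> x)\<^sup>2 * (u x)\<^sup>2 \<le> 1 * (u x)\<^sup>2"
        by (intro mult_right_mono) (auto simp: abs_square_le_1)
      then show ?case by (simp add: power_mult_distrib)
    qed
  qed
  then show ?thesis unfolding norm2_def by simp
qed

lemma inner2_scale: "inner2 \<Omega> g (\<lambda>x. c * u x) = c * inner2 \<Omega> g u"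
  unfolding inner2_def by (simp add: algebra_simps)

lemma inner2_diff_left:
  assumes "a \<in> L2 \<Omega>" and "b \<in> L2 \<Omega>" and "d \<in> L2 \<Omega>"
  shows "inner2 \<Omega> (\<lambda>x. a x - b x) d = inner2 \<Omega> a d - inner2 \<Omega> b d"
  unfolding inner2_def using L2_mult_integrable[OF assms(1,3)] L2_mult_integrable[OF assms(2,3)]
  by (simp add: left_diff_distrib)

lemma inner2_diff_right:
  assumes "u \<in> L2 \<Omega>" and "a \<in> L2 \<Omega>" and "b \<in> L2 \<Omega>"
  shows "inner2 \<Omega> u (\<lambda>x. a x - b x) = inner2 \<Omega> u a - inner2 \<Omega> u b"
  unfolding inner2_def using L2_mult_integrable[OF assms(1,2)] L2_mult_integrable[OF assms(1,3)]
  by (simp add: right_diff_distrib)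

lemma inner2_add_scaled_right:
  assumes "g \<in> L2 \<Omega>" and "a \<in> L2 \<Omega>" and "h \<in> L2 \<Omega>"
  shows "inner2 \<Omega> g (\<lambda>x. a x + s * h x) = inner2 \<Omega> g a + s * inner2 \<Omega> g h"
proof -
  have "inner2 \<Omega> g (\<lambda>x. a x + s * h x) = (\<integral>x. g x * a x + s * (g x * h x) \<partial>lebesgue_on \<Omega>)"
    unfolding inner2_def by (simp add: algebra_simps)
  also have "\<dots> = inner2 \<Omega> g a + s * inner2 \<Omega> g h"
    using L2_mult_integrable[OF assms(1,2)] L2_mult_integrable[OF assms(1,3)]
    unfolding inner2_def by (subst Bochner_Integration.integral_add) auto
  finally show ?thesis .
qed

lemma inner2_commute: "inner2 \<Omega> u v = inner2 \<Omega> v u"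
  unfolding inner2_def by (simp add: mult.commute)

lemma inner2_add_scaled_left:
  assumes "a \<in> L2 \<Omega>" and "h \<in> L2 \<Omega>" and "g \<in> L2 \<Omega>"
  shows "inner2 \<Omega> (\<lambda>x. a x + s * h x) g = inner2 \<Omega> a g + s * inner2 \<Omega> h g"
  using inner2_add_scaled_right[OF assms(3,1,2)] by (simp add: inner2_commute)

lemma norm2_add_scaled_power2:
  assumes "a \<in> L2 \<Omega>" and "h \<in> L2 \<Omega>"
  shows "(norm2 \<Omega> (\<lambda>x. a x + s * h x))\<^sup>2
    = (norm2 \<Omega> a)\<^sup>2 + 2 * s * inner2 \<Omega> a h + s\<^sup>2 * (norm2 \<Omega> h)\<^sup>2"
proof -
  have "(norm2 \<Omega> (\<lambda>x. a x + s * h x))\<^sup>2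
      = (\<integral>x. (a x)\<^sup>2 + (2 * s) * (a x * h x) + s\<^sup>2 * (h x)\<^sup>2 \<partial>lebesgue_on \<Omega>)"
    unfolding norm2_power2
    by (rule Bochner_Integration.integral_cong) (auto simp: power2_eq_square algebra_simps)
  also have "\<dots> = (norm2 \<Omega> a)\<^sup>2 + 2 * s * inner2 \<Omega> a h + s\<^sup>2 * (norm2 \<Omega> h)\<^sup>2"
    using assms L2_mult_integrable[OF assms] unfolding L2_def norm2_power2 inner2_def by simp
  finally show ?thesis .
qed

lemma quadratic_nonneg_imp_discriminant_le:
  fixes A B C :: real
  assumes "\<And>t. 0 \<le> A + 2 * B * t + C * t\<^sup>2" and "C \<ge> 0"
  shows "B\<^sup>2 \<le> A * C"
proof (cases "C = 0")
  case True
  have "B = 0"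
  proof (rule ccontr)
    assume "B \<noteq> 0"
    have "0 \<le> A + 2 * B * (- (A + 1) / (2 * B))" using assms(1)[of "- (A + 1) / (2 * B)"] True by simp
    also have "\<dots> = -1" using \<open>B \<noteq> 0\<close> by (simp add: field_simps)
    finally show False by simp
  qed
  then show ?thesis using True by simp
next
  case False
  then have "C > 0" using assms(2) by simp
  have "0 \<le> A + 2 * B * (- B / C) + C * (- B / C)\<^sup>2" by (rule assms(1))
  also have "\<dots> = A - B\<^sup>2 / C" using \<open>C > 0\<close> by (simp add: field_simps power2_eq_square)
  finally show ?thesis using \<open>C > 0\<close> by (simp add: field_simps)
qed

lemma inner2_Cauchy_Schwarz:
  assumes "u \<in> L2 \<Omega>" and "v \<in> L2 \<Omega>"
  shows "\<bar>inner2 \<Omega> u v\<bar> \<le> norm2 \<Omega> u * norm2 \<Omega> v"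
proof -
  have "0 \<le> (norm2 \<Omega> u)\<^sup>2 + 2 * inner2 \<Omega> u v * t + (norm2 \<Omega> v)\<^sup>2 * t\<^sup>2" for t
    using norm2_add_scaled_power2[OF assms, of t] zero_le_power2[of "norm2 \<Omega> (\<lambda>x. u x + t * v x)"]
    by (simp add: algebra_simps)
  then have "(inner2 \<Omega> u v)\<^sup>2 \<le> (norm2 \<Omega> u)\<^sup>2 * (norm2 \<Omega> v)\<^sup>2"
    by (rule quadratic_nonneg_imp_discriminant_le) simp
  then show ?thesis
    by (metis abs_of_nonneg norm2_nonneg power_mult_distrib real_sqrt_abs real_sqrt_le_mono zero_le_mult_iff)
qed

lemma norm2_triangle:
  assumes "a \<in> L2 \<Omega>" and "b \<in> L2 \<Omega>"
  shows "norm2 \<Omega> (\<lambda>x. a x + b x) \<le> norm2 \<Omega> a + norm2 \<Omega> b"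
proof -
  have "(norm2 \<Omega> (\<lambda>x. a x + b x))\<^sup>2 = (norm2 \<Omega> a)\<^sup>2 + 2 * inner2 \<Omega> a b + (norm2 \<Omega> b)\<^sup>2"
    using norm2_add_scaled_power2[OF assms, of 1] by simp
  also have "\<dots> \<le> (norm2 \<Omega> a + norm2 \<Omega> b)\<^sup>2"
    using inner2_Cauchy_Schwarz[OF assms] by (simp add: power2_sum)
  finally show ?thesis
    using norm2_nonneg[of \<Omega> a] norm2_nonneg[of \<Omega> b] by (meson add_nonneg_nonneg power2_le_imp_le)
qed

section \<open>The smooth part and the descent lemma\<close>

lemma standing_f_grad_L2: "standing_f \<Omega> f G Lf \<Longrightarrow> u \<in> L2 \<Omega> \<Longrightarrow> G u \<in> L2 \<Omega>"
  unfolding standing_f_def by blast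

lemma standing_f_grad_Lipschitz:
  "standing_f \<Omega> f G Lf \<Longrightarrow> u \<in> L2 \<Omega> \<Longrightarrow> v \<in> L2 \<Omega> \<Longrightarrow>
    norm2 \<Omega> (\<lambda>x. G u x - G v x) \<le> Lf * norm2 \<Omega> (\<lambda>x. u x - v x)"
  unfolding standing_f_def by blast

lemma standing_f_bounded_below:
  assumes "standing_f \<Omega> f G Lf"
  obtains c where "\<And>u. u \<in> L2 \<Omega> \<Longrightarrow> c \<le> f u"
  using assms unfolding standing_f_def by blast

lemma standing_f_Frechet:
  assumes "standing_f \<Omega> f G Lf" and "u \<in> L2 \<Omega>" and "\<epsilon> > 0"
  obtains \<delta> where "\<delta> > 0" and "\<And>v. v \<in> L2 \<Omega> \<Longrightarrow> norm2 \<Omega> (\<lambda>x. v x - u x) < \<delta> \<Longrightarrow>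
      \<bar>f v - f u - inner2 \<Omega> (G u) (\<lambda>x. v x - u x)\<bar> \<le> \<epsilon> * norm2 \<Omega> (\<lambda>x. v x - u x)"
  using assms unfolding standing_f_def by meson

lemma standing_f_has_derivative_along_line:
  assumes sf: "standing_f \<Omega> f G Lf" and u: "u \<in> L2 \<Omega>" and d: "d \<in> L2 \<Omega>"
  shows "((\<lambda>t. f (\<lambda>x. u x + t * d x)) has_real_derivative inner2 \<Omega> (G (\<lambda>x. u x + t * d x)) d) (at t)"
proof -
  define w where "w = (\<lambda>t x. u x + t * d x)"
  define D where "D = norm2 \<Omega> d"
  have w: "w t \<in> L2 \<Omega>" for t
    unfolding w_def using L2_lincomb[OF u d, of 1 t] by simp
  have wdiff: "(\<lambda>x. w y x - w t x) = (\<lambda>x. (y - t) * d x)" for y t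
    unfolding w_def by (auto simp: algebra_simps)
  have D0: "D \<ge> 0" unfolding D_def by (rule norm2_nonneg)
  have "((\<lambda>t. f (w t)) has_real_derivative inner2 \<Omega> (G (w t)) d) (at t)"
    unfolding has_field_derivative_def has_derivative_at_alt
  proof (intro conjI allI impI)
    show "bounded_linear ((*) (inner2 \<Omega> (G (w t)) d))" by (rule bounded_linear_mult_right)
    fix e :: real assume e: "e > 0"
    have "e / (D + 1) > 0" using e D0 by simp
    then obtain \<delta> where \<delta>: "\<delta> > 0" and frechet: "\<And>v. v \<in> L2 \<Omega> \<Longrightarrow> norm2 \<Omega> (\<lambda>x. v x - w t x) < \<delta> \<Longrightarrow>
        \<bar>f v - f (w t) - inner2 \<Omega> (G (w t)) (\<lambda>x. v x - w t x)\<bar> \<le> e / (D + 1) * norm2 \<Omega> (\<lambda>x. v x - w t x)"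
      by (rule standing_f_Frechet[OF sf w[of t]]) blast
    show "\<exists>r>0. \<forall>y. norm (y - t) < r \<longrightarrow>
        norm (f (w y) - f (w t) - inner2 \<Omega> (G (w t)) d * (y - t)) \<le> e * norm (y - t)"
    proof (intro exI[of _ "\<delta> / (D + 1)"] conjI allI impI)
      show "\<delta> / (D + 1) > 0" using \<delta> D0 by simp
      fix y assume y: "norm (y - t) < \<delta> / (D + 1)"
      have n: "norm2 \<Omega> (\<lambda>x. w y x - w t x) = \<bar>y - t\<bar> * D"
        unfolding wdiff D_def by (rule norm2_scale)
      have "\<bar>y - t\<bar> * D \<le> \<bar>y - t\<bar> * (D + 1)" by (simp add: mult_left_mono)
      also have "\<dots> < \<delta>" using y D0 by (simp add: field_simps)
      finally have "\<bar>f (w y) - f (w t) - inner2 \<Omega> (G (w t)) (\<lambda>x. w y x - w t x)\<bar>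
          \<le> e / (D + 1) * (\<bar>y - t\<bar> * D)"
        using frechet[OF w[of y]] n by simp
      also have "\<dots> \<le> e * \<bar>y - t\<bar>"
        using e D0 by (simp add: field_simps mult_left_mono)
      finally show "norm (f (w y) - f (w t) - inner2 \<Omega> (G (w t)) d * (y - t)) \<le> e * norm (y - t)"
        unfolding wdiff inner2_scale by (simp add: algebra_simps)
    qed
  qed
  then show ?thesis unfolding w_def .
qed

lemma descent_lemma:
  assumes sf: "standing_f \<Omega> f G Lf" and u: "u \<in> L2 \<Omega>" and v: "v \<in> L2 \<Omega>"
  shows "f v \<le> f u + inner2 \<Omega> (G u) (\<lambda>x. v x - u x) + Lf / 2 * (norm2 \<Omega> (\<lambda>x. v x - u x))\<^sup>2"
proof -
  define d where "d = (\<lambda>x. v x - u x)"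
  define w where "w = (\<lambda>t x. u x + t * d x)"
  define D where "D = norm2 \<Omega> d"
  define \<phi>' where "\<phi>' = (\<lambda>t. inner2 \<Omega> (G (w t)) d)"
  have d: "d \<in> L2 \<Omega>" unfolding d_def using L2_diff[OF v u] .
  have w: "w t \<in> L2 \<Omega>" for t unfolding w_def using L2_lincomb[OF u d, of 1 t] by simp
  have w0: "w 0 = u" and w1: "w 1 = v" unfolding w_def d_def by auto
  have norm_w: "norm2 \<Omega> (\<lambda>x. w t x - u x) = \<bar>t\<bar> * D" for t
    unfolding w_def D_def using norm2_scale[of \<Omega> t d] by simp
  have deriv: "((\<lambda>t. f (w t)) has_real_derivative \<phi>' t) (at t)" for t
    unfolding w_def \<phi>'_def by (rule standing_f_has_derivative_along_line[OF sf u d])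
  define \<psi> where "\<psi> = (\<lambda>t. f (w t) - t * \<phi>' 0 - Lf / 2 * t\<^sup>2 * D\<^sup>2)"
  have "\<psi> 1 \<le> \<psi> 0"
  proof (rule DERIV_nonpos_imp_nonincreasing[of 0 1 \<psi>])
    fix t :: real assume t: "0 \<le> t" "t \<le> 1"
    have "(\<psi> has_real_derivative (\<phi>' t - \<phi>' 0 - Lf * t * D\<^sup>2)) (at t)"
      unfolding \<psi>_def by (rule derivative_eq_intros deriv refl | simp add: power2_eq_square)+
    moreover have "\<phi>' t - \<phi>' 0 \<le> Lf * t * D\<^sup>2"
    proof -
      have "\<phi>' t - \<phi>' 0 = inner2 \<Omega> (\<lambda>x. G (w t) x - G u x) d"
        unfolding \<phi>'_def w0 using inner2_diff_left standing_f_grad_L2[OF sf] w u d by metis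
      also have "\<dots> \<le> norm2 \<Omega> (\<lambda>x. G (w t) x - G u x) * D"
        using inner2_Cauchy_Schwarz[OF L2_diff[OF standing_f_grad_L2[OF sf w[of t]] standing_f_grad_L2[OF sf u]] d]
        unfolding D_def by linarith
      also have "\<dots> \<le> (Lf * (t * D)) * D"
        using standing_f_grad_Lipschitz[OF sf w u, of t] norm_w[of t] t norm2_nonneg[of \<Omega> d]
        unfolding D_def by (intro mult_right_mono) auto
      finally show ?thesis by (simp add: power2_eq_square algebra_simps)
    qed
    ultimately show "\<exists>y. (\<psi> has_real_derivative y) (at t) \<and> y \<le> 0" by fastforce
  qed simp
  then show ?thesis unfolding \<psi>_def \<phi>'_def w0 w1 D_def d_def by simp
qed

section \<open>Optimality of a single IHT step\<close>

lemma Uad_subset_L2: "v \<in> Uad \<Omega> b \<Longrightarrow> v \<in> L2 \<Omega>"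
  unfolding Uad_def by auto

lemma Uad_convex_pointwise:
  assumes u: "u \<in> Uad \<Omega> b" and v: "v \<in> Uad \<Omega> b"
    and \<theta>: "\<theta> \<in> borel_measurable (lebesgue_on \<Omega>)" "\<And>x. 0 \<le> \<theta> x \<and> \<theta> x \<le> 1"
  shows "(\<lambda>x. u x + \<theta> x * (v x - u x)) \<in> Uad \<Omega> b"
  unfolding Uad_def
proof (intro CollectI conjI)
  have "AE x in lebesgue_on \<Omega>. \<bar>\<theta> x\<bar> \<le> 1" using \<theta>(2) by (simp add: abs_le_iff)
  then show "(\<lambda>x. u x + \<theta> x * (v x - u x)) \<in> L2 \<Omega>"
    using u v by (intro L2_add L2_mult_bounded L2_diff \<theta>(1) Uad_subset_L2)
  have convex: "\<bar>u x + \<theta> x * (v x - u x)\<bar> \<le> max \<bar>u x\<bar> \<bar>v x\<bar>" for x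
  proof -
    have "\<bar>u x + \<theta> x * (v x - u x)\<bar> = \<bar>(1 - \<theta> x) * u x + \<theta> x * v x\<bar>"
      by (simp add: algebra_simps)
    also have "\<dots> \<le> (1 - \<theta> x) * \<bar>u x\<bar> + \<theta> x * \<bar>v x\<bar>"
      using \<theta>(2)[of x] abs_triangle_ineq[of "(1 - \<theta> x) * u x" "\<theta> x * v x"] by (simp add: abs_mult)
    also have "\<dots> \<le> max \<bar>u x\<bar> \<bar>v x\<bar>"
      by (rule convex_bound_le) (use \<theta>(2)[of x] in auto)
    finally show ?thesis .
  qed
  have "AE x in lebesgue_on \<Omega>. ereal \<bar>u x\<bar> \<le> b" "AE x in lebesgue_on \<Omega>. ereal \<bar>v x\<bar> \<le> b"
    using u v unfolding Uad_def by auto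
  then show "AE x in lebesgue_on \<Omega>. ereal \<bar>u x + \<theta> x * (v x - u x)\<bar> \<le> b"
  proof eventually_elim
    case (elim x)
    have "ereal \<bar>u x + \<theta> x * (v x - u x)\<bar> \<le> ereal (max \<bar>u x\<bar> \<bar>v x\<bar>)"
      using convex[of x] ereal_less_eq(3) by blast
    also have "\<dots> \<le> b" using elim by (simp add: max_def)
    finally show ?case .
  qed
qed

lemma l0_mono:
  assumes "finite_measure (lebesgue_on \<Omega>)" and "u \<in> borel_measurable (lebesgue_on \<Omega>)"
    and "\<And>x. x \<in> \<Omega> \<Longrightarrow> u x = 0 \<Longrightarrow> w x = 0"
  shows "l0 \<Omega> w \<le> l0 \<Omega> u"
  unfolding l0_def
proof (rule finite_measure.finite_measure_mono[OF assms(1)])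
  show "{x \<in> \<Omega>. w x \<noteq> 0} \<subseteq> {x \<in> \<Omega>. u x \<noteq> 0}" using assms(3) by auto
  have "{x \<in> space (lebesgue_on \<Omega>). u x \<noteq> 0} \<in> sets (lebesgue_on \<Omega>)" using assms(2) by measurable
  then show "{x \<in> \<Omega>. u x \<noteq> 0} \<in> sets (lebesgue_on \<Omega>)" by simp
qed

lemma nonneg_if_quadratic_nonneg_near_zero:
  fixes a c :: real
  assumes "\<And>s. 0 < s \<Longrightarrow> s \<le> 1 \<Longrightarrow> 0 \<le> s * a + s\<^sup>2 * c"
  shows "0 \<le> a"
proof (rule tendsto_lowerbound)
  show "((\<lambda>s. a + s * c) \<longlongrightarrow> a) (at_right 0)"
    by (auto intro!: tendsto_eq_intros)
  have "\<forall>\<^sub>F s in at_right (0::real). 0 < s \<and> s \<le> 1"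
    by (auto simp: eventually_at_right_field intro!: exI[of _ 1])
  then show "\<forall>\<^sub>F s in at_right 0. 0 \<le> a + s * c"
  proof eventually_elim
    case (elim s)
    then have "0 \<le> s * (a + s * c)" using assms[of s] by (simp add: power2_eq_square algebra_simps)
    then show ?case using elim by (simp add: zero_le_mult_iff)
  qed
qed simp

lemma iht_obj_perturbation:
  assumes uk: "uk \<in> L2 \<Omega>" and u: "u \<in> L2 \<Omega>" and h: "h \<in> L2 \<Omega>" and g: "G uk \<in> L2 \<Omega>"
  shows "iht_obj \<Omega> f G \<alpha> \<beta> L uk (\<lambda>x. u x + s * h x) - iht_obj \<Omega> f G \<alpha> \<beta> L uk u
    = s * (inner2 \<Omega> (G uk) h + L * inner2 \<Omega> (\<lambda>x. u x - uk x) h + \<alpha> * inner2 \<Omega> u h)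
      + s\<^sup>2 * ((L + \<alpha>) / 2 * (norm2 \<Omega> h)\<^sup>2) + \<beta> * (l0 \<Omega> (\<lambda>x. u x + s * h x) - l0 \<Omega> u)"
proof -
  have e: "(\<lambda>x. u x + s * h x - uk x) = (\<lambda>x. (u x - uk x) + s * h x)"
    by (simp add: algebra_simps)
  have "inner2 \<Omega> (G uk) (\<lambda>x. u x + s * h x - uk x)
      = inner2 \<Omega> (G uk) (\<lambda>x. u x - uk x) + s * inner2 \<Omega> (G uk) h"
    unfolding e by (rule inner2_add_scaled_right[OF g L2_diff[OF u uk] h])
  moreover have "(norm2 \<Omega> (\<lambda>x. u x + s * h x - uk x))\<^sup>2 = (norm2 \<Omega> (\<lambda>x. u x - uk x))\<^sup>2
      + 2 * s * inner2 \<Omega> (\<lambda>x. u x - uk x) h + s\<^sup>2 * (norm2 \<Omega> h)\<^sup>2"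
    unfolding e by (rule norm2_add_scaled_power2[OF L2_diff[OF u uk] h])
  ultimately show ?thesis
    unfolding iht_obj_def gfun_def norm2_add_scaled_power2[OF u h] by (simp add: algebra_simps)
qed

lemma iht_step_first_order:
  assumes fm: "finite_measure (lebesgue_on \<Omega>)" and \<beta>: "\<beta> \<ge> 0"
    and uk: "uk \<in> L2 \<Omega>" and g: "G uk \<in> L2 \<Omega>" and u': "u' \<in> Uad \<Omega> b"
    and min: "\<And>w. w \<in> Uad \<Omega> b \<Longrightarrow> iht_obj \<Omega> f G \<alpha> \<beta> L uk u' \<le> iht_obj \<Omega> f G \<alpha> \<beta> L uk w"
    and v: "v \<in> Uad \<Omega> b"
    and \<psi>: "\<psi> \<in> borel_measurable (lebesgue_on \<Omega>)" "\<And>x. 0 \<le> \<psi> x \<and> \<psi> x \<le> 1"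
    and \<psi>0: "\<And>x. u' x = 0 \<Longrightarrow> \<psi> x = 0"
  shows "0 \<le> (\<integral>x. \<psi> x * (G uk x + L * (u' x - uk x) + \<alpha> * u' x) * (v x - u' x) \<partial>lebesgue_on \<Omega>)"
proof -
  have u'L: "u' \<in> L2 \<Omega>" and vL: "v \<in> L2 \<Omega>" using u' v by (auto intro: Uad_subset_L2)
  have ukL: "(\<lambda>x. u' x - uk x) \<in> L2 \<Omega>" using L2_diff[OF u'L uk] .
  define h where "h = (\<lambda>x. \<psi> x * (v x - u' x))"
  have hL: "h \<in> L2 \<Omega>"
    unfolding h_def using \<psi> by (intro L2_mult_bounded L2_diff vL u'L) (auto simp: abs_le_iff)
  define A where "A = inner2 \<Omega> (G uk) h + L * inner2 \<Omega> (\<lambda>x. u' x - uk x) h + \<alpha> * inner2 \<Omega> u' h"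
  have "0 \<le> s * A + s\<^sup>2 * ((L + \<alpha>) / 2 * (norm2 \<Omega> h)\<^sup>2)" if s: "0 < s" "s \<le> 1" for s
  proof -
    have "(\<lambda>x. s * \<psi> x) \<in> borel_measurable (lebesgue_on \<Omega>)" using \<psi>(1) by simp
    moreover have "0 \<le> s * \<psi> x \<and> s * \<psi> x \<le> 1" for x
      using s \<psi>(2)[of x] by (simp add: mult_le_one)
    ultimately have "(\<lambda>x. u' x + s * \<psi> x * (v x - u' x)) \<in> Uad \<Omega> b"
      by (rule Uad_convex_pointwise[OF u' v])
    then have "iht_obj \<Omega> f G \<alpha> \<beta> L uk u' \<le> iht_obj \<Omega> f G \<alpha> \<beta> L uk (\<lambda>x. u' x + s * h x)"
      unfolding h_def by (intro min) (simp add: mult.assoc)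
    moreover have "l0 \<Omega> (\<lambda>x. u' x + s * h x) \<le> l0 \<Omega> u'"
      using u'L \<psi>0 unfolding L2_def h_def by (intro l0_mono[OF fm]) auto
    then have "\<beta> * (l0 \<Omega> (\<lambda>x. u' x + s * h x) - l0 \<Omega> u') \<le> 0"
      using \<beta> by (simp add: mult_nonneg_nonpos)
    ultimately show ?thesis
      using iht_obj_perturbation[where G = G, OF uk u'L hL g, of f \<alpha> \<beta> L s]
      unfolding A_def by linarith
  qed
  then have "0 \<le> A" by (rule nonneg_if_quadratic_nonneg_near_zero)
  also have "A = inner2 \<Omega> (\<lambda>x. G uk x + L * (u' x - uk x) + \<alpha> * u' x) h"
    unfolding A_def
    by (simp add: inner2_add_scaled_left L2_add L2_scale g ukL u'L hL)
  also have "\<dots> = (\<integral>x. \<psi> x * (G uk x + L * (u' x - uk x) + \<alpha> * u' x) * (v x - u' x) \<partial>lebesgue_on \<Omega>)"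
    unfolding inner2_def h_def by (simp add: ac_simps)
  finally show ?thesis .
qed

lemma IHT_seq_in_Uad: "IHT_seq \<Omega> b f G \<alpha> \<beta> L u \<Longrightarrow> u k \<in> Uad \<Omega> b"
  unfolding IHT_seq_def by (cases k) auto

lemma IHT_seq_minimizes:
  "IHT_seq \<Omega> b f G \<alpha> \<beta> L u \<Longrightarrow> v \<in> Uad \<Omega> b \<Longrightarrow>
    iht_obj \<Omega> f G \<alpha> \<beta> L (u k) (u (Suc k)) \<le> iht_obj \<Omega> f G \<alpha> \<beta> L (u k) v"
  unfolding IHT_seq_def by blast

lemma IHT_seq_sufficient_decrease:
  assumes sf: "standing_f \<Omega> f G Lf" and seq: "IHT_seq \<Omega> b f G \<alpha> \<beta> L u"
  shows "f (u (Suc k)) + gfun \<alpha> \<beta> \<Omega> (u (Suc k)) + (L - Lf) / 2 * (norm2 \<Omega> (\<lambda>x. u (Suc k) x - u k x))\<^sup>2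
    \<le> f (u k) + gfun \<alpha> \<beta> \<Omega> (u k)"
proof -
  have uL: "u j \<in> L2 \<Omega>" for j using Uad_subset_L2[OF IHT_seq_in_Uad[OF seq]] .
  have "iht_obj \<Omega> f G \<alpha> \<beta> L (u k) (u (Suc k)) \<le> iht_obj \<Omega> f G \<alpha> \<beta> L (u k) (u k)"
    by (rule IHT_seq_minimizes[OF seq IHT_seq_in_Uad[OF seq]])
  moreover have "iht_obj \<Omega> f G \<alpha> \<beta> L (u k) (u k) = f (u k) + gfun \<alpha> \<beta> \<Omega> (u k)"
    unfolding iht_obj_def inner2_def norm2_def by simp
  moreover have "(L - Lf) / 2 * (norm2 \<Omega> (\<lambda>x. u (Suc k) x - u k x))\<^sup>2
      = L / 2 * (norm2 \<Omega> (\<lambda>x. u (Suc k) x - u k x))\<^sup>2 - Lf / 2 * (norm2 \<Omega> (\<lambda>x. u (Suc k) x - u k x))\<^sup>2"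
    by (simp add: algebra_simps diff_divide_distrib)
  moreover note descent_lemma[OF sf uL[of k] uL[of "Suc k"]]
  ultimately show ?thesis unfolding iht_obj_def by linarith
qed

lemma IHT_seq_step_tendsto_zero:
  assumes sf: "standing_f \<Omega> f G Lf" and seq: "IHT_seq \<Omega> b f G \<alpha> \<beta> L u"
    and \<alpha>: "\<alpha> \<ge> 0" and \<beta>: "\<beta> \<ge> 0" and L: "L > Lf"
  shows "(\<lambda>k. norm2 \<Omega> (\<lambda>x. u (Suc k) x - u k x)) \<longlonglongrightarrow> 0"
proof -
  define F where "F = (\<lambda>k. f (u k) + gfun \<alpha> \<beta> \<Omega> (u k))"
  define D where "D = (\<lambda>k. norm2 \<Omega> (\<lambda>x. u (Suc k) x - u k x))"
  obtain c where c: "\<And>v. v \<in> L2 \<Omega> \<Longrightarrow> c \<le> f v" by (rule standing_f_bounded_below[OF sf]) blast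
  have "c \<le> F k" for k
    using c[OF Uad_subset_L2[OF IHT_seq_in_Uad[OF seq]]] \<alpha> \<beta>
    unfolding F_def gfun_def l0_def by (simp add: add_increasing2)
  moreover have "F N + (L - Lf) / 2 * (\<Sum>k<N. (D k)\<^sup>2) \<le> F 0" for N
  proof (induction N)
    case (Suc N)
    then show ?case
      using IHT_seq_sufficient_decrease[OF sf seq, of N] unfolding F_def D_def by (simp add: algebra_simps)
  qed simp
  ultimately have "(\<Sum>k<N. (D k)\<^sup>2) \<le> (F 0 - c) * 2 / (L - Lf)" for N
    using L by (simp add: field_simps) (smt (verit, best))
  then have "summable (\<lambda>k. (D k)\<^sup>2)" by (intro summableI_nonneg_bounded) auto
  then have "(\<lambda>k. sqrt ((D k)\<^sup>2)) \<longlonglongrightarrow> sqrt 0"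
    by (intro tendsto_real_sqrt summable_LIMSEQ_zero)
  then show ?thesis unfolding D_def by (simp add: norm2_nonneg)
qed

section \<open>From \<open>L\<^sup>p\<close> to \<open>L\<^sup>2\<close> on a set of finite measure\<close>

lemma integral_abs_powr_eq_normp_powr:
  assumes "p > 0"
  shows "(\<integral>x. \<bar>h x\<bar> powr p \<partial>lebesgue_on \<Omega>) = normp p \<Omega> h powr p"
  unfolding normp_def using assms by (simp add: powr_powr integral_nonneg_AE)

lemma normp_nonneg: "normp p \<Omega> h \<ge> 0"
  unfolding normp_def by simp

lemma Lp_diff:
  assumes p: "p > 0" and a: "a \<in> Lp p \<Omega>" and b: "b \<in> Lp p \<Omega>"
  shows "(\<lambda>x. a x - b x) \<in> Lp p \<Omega>"
  unfolding Lp_def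
proof (intro CollectI conjI)
  show m: "(\<lambda>x. a x - b x) \<in> borel_measurable (lebesgue_on \<Omega>)"
    using a b unfolding Lp_def by auto
  show "integrable (lebesgue_on \<Omega>) (\<lambda>x. \<bar>a x - b x\<bar> powr p)"
  proof (rule Bochner_Integration.integrable_bound)
    show "integrable (lebesgue_on \<Omega>) (\<lambda>x. 2 powr p * (\<bar>a x\<bar> powr p + \<bar>b x\<bar> powr p))"
      using a b unfolding Lp_def by auto
    show "(\<lambda>x. \<bar>a x - b x\<bar> powr p) \<in> borel_measurable (lebesgue_on \<Omega>)"
      using m by measurable
    have "\<bar>a x - b x\<bar> powr p \<le> 2 powr p * (\<bar>a x\<bar> powr p + \<bar>b x\<bar> powr p)" for x
    proof -
      define m where "m = max \<bar>a x\<bar> \<bar>b x\<bar>"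
      have "\<bar>a x - b x\<bar> powr p \<le> (2 * m) powr p"
        unfolding m_def using p by (intro powr_mono2) auto
      also have "\<dots> = 2 powr p * m powr p" by (rule powr_mult)
      also have "\<dots> \<le> 2 powr p * (\<bar>a x\<bar> powr p + \<bar>b x\<bar> powr p)"
        unfolding m_def by (intro mult_left_mono) (auto simp: max_def)
      finally show ?thesis .
    qed
    then show "AE x in lebesgue_on \<Omega>. norm (\<bar>a x - b x\<bar> powr p) \<le> norm (2 powr p * (\<bar>a x\<bar> powr p + \<bar>b x\<bar> powr p))"
      by simp
  qed
qed

lemma power2_le_powr_bound:
  fixes x \<epsilon> p :: real
  assumes \<epsilon>: "\<epsilon> > 0" and p: "p > 2"
  shows "x\<^sup>2 \<le> \<epsilon>\<^sup>2 + \<epsilon> powr (2 - p) * \<bar>x\<bar> powr p"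
proof (cases "\<bar>x\<bar> \<le> \<epsilon>")
  case True
  then have "\<bar>x\<bar>\<^sup>2 \<le> \<epsilon>\<^sup>2" by (intro power_mono) auto
  then show ?thesis by (simp add: add_increasing2)
next
  case False
  then have x: "\<bar>x\<bar> > 0" using \<epsilon> by simp
  have "1 = \<epsilon> powr (2 - p) * \<epsilon> powr (p - 2)" using \<epsilon> by (simp add: powr_add[symmetric])
  also have "\<dots> \<le> \<epsilon> powr (2 - p) * \<bar>x\<bar> powr (p - 2)"
    using False \<epsilon> p by (intro mult_left_mono powr_mono2) auto
  finally have "x\<^sup>2 \<le> \<bar>x\<bar> powr 2 * (\<epsilon> powr (2 - p) * \<bar>x\<bar> powr (p - 2))"
    using x by (simp add: mult_le_cancel_left1 powr_numeral)
  also have "\<dots> = \<epsilon> powr (2 - p) * \<bar>x\<bar> powr p"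
    using powr_add[of "\<bar>x\<bar>" 2 "p - 2"] x by (simp add: powr_numeral)
  finally show ?thesis by (simp add: add_increasing)
qed

lemma norm2_power2_le_normp_powr:
  assumes fm: "finite_measure (lebesgue_on \<Omega>)" and p: "p > 2" and \<epsilon>: "\<epsilon> > 0"
    and h: "h \<in> L2 \<Omega>" "h \<in> Lp p \<Omega>"
  shows "(norm2 \<Omega> h)\<^sup>2 \<le> \<epsilon>\<^sup>2 * measure (lebesgue_on \<Omega>) \<Omega> + \<epsilon> powr (2 - p) * normp p \<Omega> h powr p"
proof -
  have "(norm2 \<Omega> h)\<^sup>2 \<le> (\<integral>x. \<epsilon>\<^sup>2 + \<epsilon> powr (2 - p) * \<bar>h x\<bar> powr p \<partial>lebesgue_on \<Omega>)"
    unfolding norm2_power2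
  proof (rule integral_mono)
    show "integrable (lebesgue_on \<Omega>) (\<lambda>x. (h x)\<^sup>2)" using h unfolding L2_def by auto
    show "integrable (lebesgue_on \<Omega>) (\<lambda>x. \<epsilon>\<^sup>2 + \<epsilon> powr (2 - p) * \<bar>h x\<bar> powr p)"
      using h fm unfolding Lp_def by (auto intro: finite_measure.integrable_const)
    show "(h x)\<^sup>2 \<le> \<epsilon>\<^sup>2 + \<epsilon> powr (2 - p) * \<bar>h x\<bar> powr p" for x
      by (rule power2_le_powr_bound[OF \<epsilon> p])
  qed
  also have "\<dots> = \<epsilon>\<^sup>2 * measure (lebesgue_on \<Omega>) \<Omega> + \<epsilon> powr (2 - p) * normp p \<Omega> h powr p"
    using h fm p unfolding Lp_def
    by (subst Bochner_Integration.integral_add)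
      (auto intro: finite_measure.integrable_const simp: integral_abs_powr_eq_normp_powr)
  finally show ?thesis .
qed

lemma norm2_le_if_normp_le:
  assumes fm: "finite_measure (lebesgue_on \<Omega>)" and p: "p > 2"
    and h: "h \<in> L2 \<Omega>" "h \<in> Lp p \<Omega>" and C: "normp p \<Omega> h \<le> C"
  shows "norm2 \<Omega> h \<le> sqrt (measure (lebesgue_on \<Omega>) \<Omega> + C powr p)"
proof (rule real_le_rsqrt)
  have "(norm2 \<Omega> h)\<^sup>2 \<le> measure (lebesgue_on \<Omega>) \<Omega> + normp p \<Omega> h powr p"
    using norm2_power2_le_normp_powr[OF fm p zero_less_one h] by simp
  also have "\<dots> \<le> measure (lebesgue_on \<Omega>) \<Omega> + C powr p"
    using C p normp_nonneg[of p \<Omega> h] by (simp add: powr_mono2)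
  finally show "(norm2 \<Omega> h)\<^sup>2 \<le> measure (lebesgue_on \<Omega>) \<Omega> + C powr p" .
qed

lemma norm2_tendsto_zero_if_normp_tendsto_zero:
  assumes fm: "finite_measure (lebesgue_on \<Omega>)" and p: "p > 2"
    and h: "\<And>j. h j \<in> L2 \<Omega>" "\<And>j. h j \<in> Lp p \<Omega>"
    and lim: "(\<lambda>j. normp p \<Omega> (h j)) \<longlonglongrightarrow> 0"
  shows "(\<lambda>j. norm2 \<Omega> (h j)) \<longlonglongrightarrow> 0"
proof -
  define \<mu> where "\<mu> = measure (lebesgue_on \<Omega>) \<Omega>"
  have \<mu>: "\<mu> \<ge> 0" unfolding \<mu>_def by simp
  have "(\<lambda>j. (norm2 \<Omega> (h j))\<^sup>2) \<longlonglongrightarrow> 0"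
  proof (rule order_tendstoI)
    fix r :: real assume r: "r > 0"
    define \<epsilon> where "\<epsilon> = sqrt (r / (2 * (\<mu> + 1)))"
    have \<epsilon>: "\<epsilon> > 0" unfolding \<epsilon>_def using r \<mu> by simp
    have "\<epsilon>\<^sup>2 * \<mu> = r / 2 * (\<mu> / (\<mu> + 1))" unfolding \<epsilon>_def using r \<mu> by (simp add: field_simps)
    also have "\<dots> < r / 2" using r \<mu> by (simp add: field_simps)
    finally have small: "\<epsilon>\<^sup>2 * \<mu> < r / 2" .
    have "(\<lambda>j. \<epsilon> powr (2 - p) * normp p \<Omega> (h j) powr p) \<longlonglongrightarrow> \<epsilon> powr (2 - p) * 0"
      using p by (intro tendsto_mult_left tendsto_zero_powrI[OF lim]) (auto simp: normp_nonneg)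
    then have "\<forall>\<^sub>F j in sequentially. \<epsilon> powr (2 - p) * normp p \<Omega> (h j) powr p < r / 2"
      using r by (intro order_tendstoD(2)) auto
    then show "\<forall>\<^sub>F j in sequentially. (norm2 \<Omega> (h j))\<^sup>2 < r"
    proof eventually_elim
      case (elim j)
      then show ?case
        using norm2_power2_le_normp_powr[OF fm p \<epsilon> h(1)[of j] h(2)[of j]] small
        unfolding \<mu>_def by (simp add: mult.commute)
    qed
  qed (auto intro: always_eventually less_le_trans[OF _ zero_le_power2])
  then have "(\<lambda>j. sqrt ((norm2 \<Omega> (h j))\<^sup>2)) \<longlonglongrightarrow> sqrt 0" by (rule tendsto_real_sqrt)
  then show ?thesis by (simp add: norm2_nonneg)
qed

section \<open>Weak and strong convergence\<close>

lemma weak_conv_L2_const: "v \<in> L2 \<Omega> \<Longrightarrow> weak_conv_L2 \<Omega> (\<lambda>_. v) v"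
  unfolding weak_conv_L2_def by simp

lemma weak_conv_L2_subseq:
  "weak_conv_L2 \<Omega> y w \<Longrightarrow> strict_mono r \<Longrightarrow> weak_conv_L2 \<Omega> (y \<circ> r) w"
  unfolding weak_conv_L2_def using LIMSEQ_subseq_LIMSEQ by (fastforce simp: o_def)

lemma norm2_tendsto_zero_add:
  assumes "\<And>j. a j \<in> L2 \<Omega>" and "\<And>j. b j \<in> L2 \<Omega>"
    and "(\<lambda>j. norm2 \<Omega> (a j)) \<longlonglongrightarrow> 0" and "(\<lambda>j. norm2 \<Omega> (b j)) \<longlonglongrightarrow> 0"
  shows "(\<lambda>j. norm2 \<Omega> (\<lambda>x. a j x + b j x)) \<longlonglongrightarrow> 0"
proof (rule Lim_null_comparison)
  show "\<forall>\<^sub>F j in sequentially. norm (norm2 \<Omega> (\<lambda>x. a j x + b j x)) \<le> norm2 \<Omega> (a j) + norm2 \<Omega> (b j)"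
    using norm2_triangle[OF assms(1,2)] by (simp add: norm2_nonneg)
  show "(\<lambda>j. norm2 \<Omega> (a j) + norm2 \<Omega> (b j)) \<longlonglongrightarrow> 0"
    using tendsto_add[OF assms(3,4)] by simp
qed

lemma inner2_tendsto_zero:
  assumes "\<And>j. y j \<in> L2 \<Omega>" and "\<And>j. norm2 \<Omega> (y j) \<le> B"
    and "\<And>j. a j \<in> L2 \<Omega>" and "(\<lambda>j. norm2 \<Omega> (a j)) \<longlonglongrightarrow> 0"
  shows "(\<lambda>j. inner2 \<Omega> (y j) (a j)) \<longlonglongrightarrow> 0"
proof (rule Lim_null_comparison)
  show "\<forall>\<^sub>F j in sequentially. norm (inner2 \<Omega> (y j) (a j)) \<le> B * norm2 \<Omega> (a j)"
    using inner2_Cauchy_Schwarz[OF assms(1,3)] assms(2)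
    by (intro always_eventually allI) (smt (verit) mult_right_mono norm2_nonneg real_norm_def)
  show "(\<lambda>j. B * norm2 \<Omega> (a j)) \<longlonglongrightarrow> 0"
    using tendsto_mult_left[OF assms(4), of B] by simp
qed

lemma weak_conv_L2_perturb:
  assumes y: "weak_conv_L2 \<Omega> y w" and z: "\<And>j. z j \<in> L2 \<Omega>"
    and d: "(\<lambda>j. norm2 \<Omega> (\<lambda>x. z j x - y j x)) \<longlonglongrightarrow> 0"
  shows "weak_conv_L2 \<Omega> z w"
  unfolding weak_conv_L2_def
proof (intro conjI allI ballI z)
  have yL: "y j \<in> L2 \<Omega>" for j using y unfolding weak_conv_L2_def by blast
  show "w \<in> L2 \<Omega>" using y unfolding weak_conv_L2_def by blast
  fix v assume v: "v \<in> L2 \<Omega>"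
  have "(\<lambda>j. inner2 \<Omega> v (\<lambda>x. z j x - y j x)) \<longlonglongrightarrow> 0"
    using d v yL z by (intro inner2_tendsto_zero[where B = "norm2 \<Omega> v"] L2_diff) auto
  moreover have "(\<lambda>j. inner2 \<Omega> (y j) v) \<longlonglongrightarrow> inner2 \<Omega> w v"
    using y v unfolding weak_conv_L2_def by blast
  ultimately have "(\<lambda>j. inner2 \<Omega> (y j) v + inner2 \<Omega> v (\<lambda>x. z j x - y j x)) \<longlonglongrightarrow> inner2 \<Omega> w v + 0"
    by (intro tendsto_add)
  moreover have "inner2 \<Omega> (y j) v + inner2 \<Omega> v (\<lambda>x. z j x - y j x) = inner2 \<Omega> (z j) v" for j
    using inner2_diff_right[OF v z yL] by (simp add: inner2_commute)
  ultimately show "(\<lambda>j. inner2 \<Omega> (z j) v) \<longlonglongrightarrow> inner2 \<Omega> w v" by simp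
qed

text \<open>The bound \<open>B\<close> would follow from uniform boundedness; here it is a hypothesis, and in the
  application it comes from the \<open>L\<^sup>p\<close> bound on the iterates.\<close>

lemma inner2_tendsto_weak_strong:
  assumes y: "weak_conv_L2 \<Omega> y w" and B: "\<And>j. norm2 \<Omega> (y j) \<le> B"
    and a: "\<And>j. a j \<in> L2 \<Omega>" and al: "al \<in> L2 \<Omega>"
    and lim: "(\<lambda>j. norm2 \<Omega> (\<lambda>x. a j x - al x)) \<longlonglongrightarrow> 0"
  shows "(\<lambda>j. inner2 \<Omega> (y j) (a j)) \<longlonglongrightarrow> inner2 \<Omega> w al"
proof -
  have yL: "y j \<in> L2 \<Omega>" for j using y unfolding weak_conv_L2_def by blast
  have "(\<lambda>j. inner2 \<Omega> (y j) (\<lambda>x. a j x - al x)) \<longlonglongrightarrow> 0"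
    using yL B a al lim by (intro inner2_tendsto_zero L2_diff)
  moreover have "(\<lambda>j. inner2 \<Omega> (y j) al) \<longlonglongrightarrow> inner2 \<Omega> w al"
    using y al unfolding weak_conv_L2_def by blast
  ultimately have "(\<lambda>j. inner2 \<Omega> (y j) (\<lambda>x. a j x - al x) + inner2 \<Omega> (y j) al) \<longlonglongrightarrow> 0 + inner2 \<Omega> w al"
    by (rule tendsto_add)
  then show ?thesis using inner2_diff_right[OF yL a al] by simp
qed

lemma AE_abs_le_1_if_tendsto:
  assumes "\<And>j x. \<bar>\<psi> j x\<bar> \<le> 1" and "AE x in M. (\<lambda>j. \<psi> j x) \<longlonglongrightarrow> \<psi>l x"
  shows "AE x in M. \<bar>\<psi>l x\<bar> \<le> (1::real)"
  using assms(2)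
proof eventually_elim
  case (elim x)
  then have "(\<lambda>j. \<bar>\<psi> j x\<bar>) \<longlonglongrightarrow> \<bar>\<psi>l x\<bar>" by (rule tendsto_rabs)
  then show ?case by (rule LIMSEQ_le_const2) (use assms(1) in auto)
qed

lemma norm2_mult_tendsto_dominated:
  assumes h: "h \<in> L2 \<Omega>"
    and \<psi>: "\<And>j. \<psi> j \<in> borel_measurable (lebesgue_on \<Omega>)" "\<And>j x. \<bar>\<psi> j x\<bar> \<le> 1"
    and \<psi>l: "\<psi>l \<in> borel_measurable (lebesgue_on \<Omega>)"
    and lim: "AE x in lebesgue_on \<Omega>. (\<lambda>j. \<psi> j x) \<longlonglongrightarrow> \<psi>l x"
  shows "(\<lambda>j. norm2 \<Omega> (\<lambda>x. \<psi> j x * h x - \<psi>l x * h x)) \<longlonglongrightarrow> 0"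
proof -
  have [measurable]: "h \<in> borel_measurable (lebesgue_on \<Omega>)" using h unfolding L2_def by auto
  have "(\<lambda>j. \<integral>x. (\<psi> j x * h x - \<psi>l x * h x)\<^sup>2 \<partial>lebesgue_on \<Omega>) \<longlonglongrightarrow> (\<integral>x. 0 \<partial>lebesgue_on \<Omega>)"
  proof (rule integral_dominated_convergence[where w = "\<lambda>x. 4 * (h x)\<^sup>2"])
    show "integrable (lebesgue_on \<Omega>) (\<lambda>x. 4 * (h x)\<^sup>2)" using h unfolding L2_def by simp
    show "(\<lambda>x. (\<psi> j x * h x - \<psi>l x * h x)\<^sup>2) \<in> borel_measurable (lebesgue_on \<Omega>)" for j
      using \<psi>(1) \<psi>l by measurable
    show "AE x in lebesgue_on \<Omega>. (\<lambda>j. (\<psi> j x * h x - \<psi>l x * h x)\<^sup>2) \<longlonglongrightarrow> 0"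
      using lim by eventually_elim (auto intro!: tendsto_eq_intros)
    show "AE x in lebesgue_on \<Omega>. norm ((\<psi> j x * h x - \<psi>l x * h x)\<^sup>2) \<le> 4 * (h x)\<^sup>2" for j
      using AE_abs_le_1_if_tendsto[OF \<psi>(2) lim]
    proof eventually_elim
      case (elim x)
      have "\<bar>\<psi> j x - \<psi>l x\<bar> \<le> 2" using elim \<psi>(2)[of j x] by linarith
      then have "(\<psi> j x - \<psi>l x)\<^sup>2 \<le> 2\<^sup>2" by (metis abs_le_square_iff abs_numeral)
      then have "(\<psi> j x - \<psi>l x)\<^sup>2 * (h x)\<^sup>2 \<le> 4 * (h x)\<^sup>2" by (intro mult_right_mono) auto
      then show ?case by (simp add: power_mult_distrib left_diff_distrib[symmetric])
    qed
  qed simp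
  then have "(\<lambda>j. sqrt (\<integral>x. (\<psi> j x * h x - \<psi>l x * h x)\<^sup>2 \<partial>lebesgue_on \<Omega>)) \<longlonglongrightarrow> sqrt 0"
    by (intro tendsto_real_sqrt) simp
  then show ?thesis unfolding norm2_def by simp
qed

lemma norm2_mult_tendsto:
  assumes \<psi>: "\<And>j. \<psi> j \<in> borel_measurable (lebesgue_on \<Omega>)" "\<And>j x. \<bar>\<psi> j x\<bar> \<le> 1"
    and \<psi>l: "\<psi>l \<in> borel_measurable (lebesgue_on \<Omega>)"
    and lim: "AE x in lebesgue_on \<Omega>. (\<lambda>j. \<psi> j x) \<longlonglongrightarrow> \<psi>l x"
    and q: "\<And>j. q j \<in> L2 \<Omega>" and g: "g \<in> L2 \<Omega>"
    and qg: "(\<lambda>j. norm2 \<Omega> (\<lambda>x. q j x - g x)) \<longlonglongrightarrow> 0"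
  shows "(\<lambda>j. norm2 \<Omega> (\<lambda>x. \<psi> j x * q j x - \<psi>l x * g x)) \<longlonglongrightarrow> 0"
proof -
  have \<psi>b: "AE x in lebesgue_on \<Omega>. \<bar>\<psi> j x\<bar> \<le> 1" for j using \<psi>(2) by simp
  have \<psi>lb: "AE x in lebesgue_on \<Omega>. \<bar>\<psi>l x\<bar> \<le> 1" by (rule AE_abs_le_1_if_tendsto[OF \<psi>(2) lim])
  have "(\<lambda>j. norm2 \<Omega> (\<lambda>x. \<psi> j x * (q j x - g x))) \<longlonglongrightarrow> 0"
  proof (rule tendsto_sandwich[OF _ _ tendsto_const qg])
    show "\<forall>\<^sub>F j in sequentially. 0 \<le> norm2 \<Omega> (\<lambda>x. \<psi> j x * (q j x - g x))"
      by (simp add: norm2_nonneg)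
    show "\<forall>\<^sub>F j in sequentially. norm2 \<Omega> (\<lambda>x. \<psi> j x * (q j x - g x)) \<le> norm2 \<Omega> (\<lambda>x. q j x - g x)"
      using norm2_mult_bounded_le[OF L2_diff[OF q g] \<psi>(1) \<psi>b] by simp
  qed
  then have "(\<lambda>j. norm2 \<Omega> (\<lambda>x. \<psi> j x * (q j x - g x) + (\<psi> j x * g x - \<psi>l x * g x))) \<longlonglongrightarrow> 0"
    using norm2_mult_tendsto_dominated[OF g \<psi> \<psi>l lim] q g \<psi>(1) \<psi>l \<psi>b \<psi>lb
    by (intro norm2_tendsto_zero_add L2_mult_bounded L2_diff)
  then show ?thesis by (simp add: algebra_simps)
qed

section \<open>Passing to the limit in the tested optimality condition\<close>

lemma integral_linear_combination5:
  fixes f\<^sub>1 f\<^sub>2 f\<^sub>3 f\<^sub>4 f\<^sub>5 :: "'b \<Rightarrow> real"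
  assumes "integrable M f\<^sub>1" "integrable M f\<^sub>2" "integrable M f\<^sub>3" "integrable M f\<^sub>4" "integrable M f\<^sub>5"
  shows "(\<integral>x. f\<^sub>1 x - f\<^sub>2 x + a * f\<^sub>3 x - b * f\<^sub>4 x + c * f\<^sub>5 x \<partial>M)
    = (\<integral>x. f\<^sub>1 x \<partial>M) - (\<integral>x. f\<^sub>2 x \<partial>M) + a * (\<integral>x. f\<^sub>3 x \<partial>M) - b * (\<integral>x. f\<^sub>4 x \<partial>M)
      + c * (\<integral>x. f\<^sub>5 x \<partial>M)"
  using assms by (simp add: Bochner_Integration.integral_add Bochner_Integration.integral_diff)

text \<open>The term \<open>-\<alpha> \<psi> y\<^sup>2\<close> of the tested integral is not weakly continuous in \<open>y\<close>. Adding
  \<open>\<alpha> \<psi> (y - w)\<^sup>2 \<ge> 0\<close> leaves only pairings of \<open>y\<close> with factors that converge strongly.\<close>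

lemma tested_integral_identity:
  assumes y: "y \<in> L2 \<Omega>" and q: "q \<in> L2 \<Omega>" and v: "v \<in> L2 \<Omega>" and w: "w \<in> L2 \<Omega>"
    and \<psi>: "\<psi> \<in> borel_measurable (lebesgue_on \<Omega>)" "AE x in lebesgue_on \<Omega>. \<bar>\<psi> x\<bar> \<le> 1"
  shows "(\<integral>x. \<psi> x * (q x + \<alpha> * y x) * (v x - y x) \<partial>lebesgue_on \<Omega>)
      + \<alpha> * (\<integral>x. \<psi> x * (y x - w x)\<^sup>2 \<partial>lebesgue_on \<Omega>)
    = inner2 \<Omega> v (\<lambda>x. \<psi> x * q x) - inner2 \<Omega> y (\<lambda>x. \<psi> x * q x) + \<alpha> * inner2 \<Omega> y (\<lambda>x. \<psi> x * v x)
      - 2 * \<alpha> * inner2 \<Omega> y (\<lambda>x. \<psi> x * w x) + \<alpha> * inner2 \<Omega> w (\<lambda>x. \<psi> x * w x)"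
proof -
  let ?M = "lebesgue_on \<Omega>"
  have \<psi>q: "(\<lambda>x. \<psi> x * q x) \<in> L2 \<Omega>" and \<psi>v: "(\<lambda>x. \<psi> x * v x) \<in> L2 \<Omega>"
    and \<psi>w: "(\<lambda>x. \<psi> x * w x) \<in> L2 \<Omega>"
    using L2_mult_bounded[OF _ \<psi>] q v w by blast+
  have "integrable ?M (\<lambda>x. (\<psi> x * (1 * q x + \<alpha> * y x)) * (v x - y x))"
    by (intro L2_mult_integrable L2_mult_bounded[OF _ \<psi>] L2_lincomb L2_diff q y v)
  then have i1: "integrable ?M (\<lambda>x. \<psi> x * (q x + \<alpha> * y x) * (v x - y x))" by simp
  have "integrable ?M (\<lambda>x. (\<psi> x * (y x - w x)) * (y x - w x))"
    by (intro L2_mult_integrable L2_mult_bounded[OF _ \<psi>] L2_diff y w)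
  then have i2: "integrable ?M (\<lambda>x. \<alpha> * (\<psi> x * (y x - w x)\<^sup>2))"
    by (simp add: power2_eq_square mult.assoc)
  have "(\<integral>x. \<psi> x * (q x + \<alpha> * y x) * (v x - y x) \<partial>?M) + \<alpha> * (\<integral>x. \<psi> x * (y x - w x)\<^sup>2 \<partial>?M)
    = (\<integral>x. \<psi> x * (q x + \<alpha> * y x) * (v x - y x) + \<alpha> * (\<psi> x * (y x - w x)\<^sup>2) \<partial>?M)"
    using Bochner_Integration.integral_add[OF i1 i2] by simp
  also have "\<dots> = (\<integral>x. v x * (\<psi> x * q x) - y x * (\<psi> x * q x) + \<alpha> * (y x * (\<psi> x * v x))
      - 2 * \<alpha> * (y x * (\<psi> x * w x)) + \<alpha> * (w x * (\<psi> x * w x)) \<partial>?M)"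
    by (rule Bochner_Integration.integral_cong) (simp_all add: power2_eq_square algebra_simps)
  also have "\<dots> = inner2 \<Omega> v (\<lambda>x. \<psi> x * q x) - inner2 \<Omega> y (\<lambda>x. \<psi> x * q x)
      + \<alpha> * inner2 \<Omega> y (\<lambda>x. \<psi> x * v x) - 2 * \<alpha> * inner2 \<Omega> y (\<lambda>x. \<psi> x * w x)
      + \<alpha> * inner2 \<Omega> w (\<lambda>x. \<psi> x * w x)"
    unfolding inner2_def
    by (intro integral_linear_combination5 L2_mult_integrable \<psi>q \<psi>v \<psi>w v y w)
  finally show ?thesis .
qed

lemma variational_inequality_limit:
  assumes y: "weak_conv_L2 \<Omega> y w" and B: "\<And>j. norm2 \<Omega> (y j) \<le> B"
    and q: "\<And>j. q j \<in> L2 \<Omega>" and g: "g \<in> L2 \<Omega>"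
    and qg: "(\<lambda>j. norm2 \<Omega> (\<lambda>x. q j x - g x)) \<longlonglongrightarrow> 0"
    and \<psi>: "\<And>j. \<psi> j \<in> borel_measurable (lebesgue_on \<Omega>)" "\<And>j x. 0 \<le> \<psi> j x \<and> \<psi> j x \<le> 1"
    and \<psi>l: "\<psi>l \<in> borel_measurable (lebesgue_on \<Omega>)"
    and lim: "AE x in lebesgue_on \<Omega>. (\<lambda>j. \<psi> j x) \<longlonglongrightarrow> \<psi>l x"
    and v: "v \<in> L2 \<Omega>" and \<alpha>: "\<alpha> \<ge> 0"
    and tested: "\<And>j. 0 \<le> (\<integral>x. \<psi> j x * (q j x + \<alpha> * y j x) * (v x - y j x) \<partial>lebesgue_on \<Omega>)"
  shows "0 \<le> (\<integral>x. \<psi>l x * (g x + \<alpha> * w x) * (v x - w x) \<partial>lebesgue_on \<Omega>)"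
proof -
  define E where "E = (\<lambda>y q \<psi>. inner2 \<Omega> v (\<lambda>x. \<psi> x * q x) - inner2 \<Omega> y (\<lambda>x. \<psi> x * q x)
    + \<alpha> * inner2 \<Omega> y (\<lambda>x. \<psi> x * v x) - 2 * \<alpha> * inner2 \<Omega> y (\<lambda>x. \<psi> x * w x)
    + \<alpha> * inner2 \<Omega> w (\<lambda>x. \<psi> x * w x))"
  have yL: "y j \<in> L2 \<Omega>" for j using y unfolding weak_conv_L2_def by blast
  have wL: "w \<in> L2 \<Omega>" using y unfolding weak_conv_L2_def by blast
  have \<psi>b: "\<bar>\<psi> j x\<bar> \<le> 1" for j x using \<psi>(2)[of j x] by simp
  have \<psi>lb: "AE x in lebesgue_on \<Omega>. \<bar>\<psi>l x\<bar> \<le> 1" by (rule AE_abs_le_1_if_tendsto[OF \<psi>b lim])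
  have "0 \<le> E (y j) (q j) (\<psi> j)" for j
  proof -
    have "0 \<le> \<alpha> * (\<integral>x. \<psi> j x * (y j x - w x)\<^sup>2 \<partial>lebesgue_on \<Omega>)"
      using \<alpha> \<psi>(2) by (simp add: integral_nonneg_AE)
    moreover have "AE x in lebesgue_on \<Omega>. \<bar>\<psi> j x\<bar> \<le> 1" using \<psi>b by simp
    note tested_integral_identity[OF yL[of j] q[of j] v wL \<psi>(1)[of j] this, of \<alpha>]
    ultimately show ?thesis using tested[of j] unfolding E_def by linarith
  qed
  moreover have "(\<lambda>j. E (y j) (q j) (\<psi> j)) \<longlonglongrightarrow> E w g \<psi>l"
  proof -
    note strong = norm2_mult_tendsto[OF \<psi>(1) \<psi>b \<psi>l lim]
    have sq: "(\<lambda>j. norm2 \<Omega> (\<lambda>x. \<psi> j x * q j x - \<psi>l x * g x)) \<longlonglongrightarrow> 0" by (rule strong[OF q g qg])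
    have sv: "(\<lambda>j. norm2 \<Omega> (\<lambda>x. \<psi> j x * v x - \<psi>l x * v x)) \<longlonglongrightarrow> 0" using strong[OF v v] by (simp add: norm2_def)
    have sw: "(\<lambda>j. norm2 \<Omega> (\<lambda>x. \<psi> j x * w x - \<psi>l x * w x)) \<longlonglongrightarrow> 0" using strong[OF wL wL] by (simp add: norm2_def)
    have L2: "(\<lambda>x. \<psi> j x * h x) \<in> L2 \<Omega>" "(\<lambda>x. \<psi>l x * h x) \<in> L2 \<Omega>" if "h \<in> L2 \<Omega>" for j h
      using that \<psi>(1) \<psi>b \<psi>l \<psi>lb by (auto intro: L2_mult_bounded)
    note weak_strong = inner2_tendsto_weak_strong[OF y B] inner2_tendsto_weak_strong[OF weak_conv_L2_const order_refl]
    show ?thesis unfolding E_def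
      by (intro tendsto_intros weak_strong L2 q g v wL sq sv sw)
  qed
  ultimately have "0 \<le> E w g \<psi>l" by (intro LIMSEQ_le_const) auto
  also have "E w g \<psi>l = (\<integral>x. \<psi>l x * (g x + \<alpha> * w x) * (v x - w x) \<partial>lebesgue_on \<Omega>)"
    using tested_integral_identity[OF wL g v wL \<psi>l \<psi>lb] unfolding E_def by simp
  finally show ?thesis .
qed

lemma AE_nonneg_if_set_integrals_nonneg:
  fixes H :: "'b \<Rightarrow> real"
  assumes H: "integrable M H" and nonneg: "\<And>A. A \<in> sets M \<Longrightarrow> 0 \<le> (\<integral>x. indicator A x * H x \<partial>M)"
  shows "AE x in M. 0 \<le> H x"
proof -
  define A where "A = {x \<in> space M. H x < 0}"
  have A: "A \<in> sets M" unfolding A_def using H by measurable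
  have int: "integrable M (\<lambda>x. - (indicator A x * H x))"
    using integrable_real_mult_indicator[OF A H] by (simp add: mult.commute)
  have nn: "AE x in M. 0 \<le> - (indicator A x * H x)"
    by (rule AE_I2) (auto simp: A_def indicator_def)
  have "(\<integral>x. - (indicator A x * H x) \<partial>M) = 0"
    using nonneg[OF A] integral_nonneg_AE[OF nn] by simp
  then have "AE x in M. - (indicator A x * H x) = 0"
    using integral_nonneg_eq_0_iff_AE[OF int nn] by simp
  with AE_space show ?thesis
    by eventually_elim (auto simp: A_def indicator_def split: if_splits)
qed

lemma variational_inequality_limit_AE:
  assumes y: "weak_conv_L2 \<Omega> y w" and B: "\<And>j. norm2 \<Omega> (y j) \<le> B"
    and q: "\<And>j. q j \<in> L2 \<Omega>" and g: "g \<in> L2 \<Omega>"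
    and qg: "(\<lambda>j. norm2 \<Omega> (\<lambda>x. q j x - g x)) \<longlonglongrightarrow> 0"
    and \<psi>: "\<And>j. \<psi> j \<in> borel_measurable (lebesgue_on \<Omega>)" "\<And>j x. 0 \<le> \<psi> j x \<and> \<psi> j x \<le> 1"
    and \<psi>l: "\<psi>l \<in> borel_measurable (lebesgue_on \<Omega>)"
    and lim: "AE x in lebesgue_on \<Omega>. (\<lambda>j. \<psi> j x) \<longlonglongrightarrow> \<psi>l x"
    and v: "v \<in> L2 \<Omega>" and \<alpha>: "\<alpha> \<ge> 0"
    and tested: "\<And>A j. A \<in> sets (lebesgue_on \<Omega>) \<Longrightarrow>
      0 \<le> (\<integral>x. indicator A x * \<psi> j x * (q j x + \<alpha> * y j x) * (v x - y j x) \<partial>lebesgue_on \<Omega>)"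
  shows "AE x in lebesgue_on \<Omega>. (g x + \<alpha> * w x) * (v x - w x) * \<psi>l x \<ge> 0"
proof (rule AE_nonneg_if_set_integrals_nonneg)
  have wL: "w \<in> L2 \<Omega>" using y unfolding weak_conv_L2_def by blast
  have "AE x in lebesgue_on \<Omega>. \<bar>\<psi>l x\<bar> \<le> 1"
    using \<psi>(2) by (intro AE_abs_le_1_if_tendsto[OF _ lim]) (simp add: abs_le_iff)
  then show "integrable (lebesgue_on \<Omega>) (\<lambda>x. (g x + \<alpha> * w x) * (v x - w x) * \<psi>l x)"
    using L2_mult_integrable[OF L2_lincomb[OF g wL, of 1 \<alpha>] L2_mult_bounded[OF L2_diff[OF v wL] \<psi>l]]
    by (simp add: ac_simps)
  fix A assume A: "A \<in> sets (lebesgue_on \<Omega>)"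
  have "0 \<le> (\<integral>x. (indicator A x * \<psi>l x) * (g x + \<alpha> * w x) * (v x - w x) \<partial>lebesgue_on \<Omega>)"
  proof (rule variational_inequality_limit[OF y B q g qg _ _ _ _ v \<alpha>])
    show "(\<lambda>x. indicator A x * \<psi> j x) \<in> borel_measurable (lebesgue_on \<Omega>)" for j
      using A \<psi>(1) by measurable
    show "0 \<le> indicator A x * \<psi> j x \<and> indicator A x * \<psi> j x \<le> 1" for j x
      using \<psi>(2)[of j x] by (simp add: indicator_def)
    show "(\<lambda>x. indicator A x * \<psi>l x) \<in> borel_measurable (lebesgue_on \<Omega>)"
      using A \<psi>l by measurable
    show "AE x in lebesgue_on \<Omega>. (\<lambda>j. indicator A x * \<psi> j x) \<longlonglongrightarrow> indicator A x * \<psi>l x"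
      using lim by eventually_elim (rule tendsto_mult_left)
    show "0 \<le> (\<integral>x. indicator A x * \<psi> j x * (q j x + \<alpha> * y j x) * (v x - y j x) \<partial>lebesgue_on \<Omega>)" for j
      by (rule tested[OF A])
  qed
  then show "0 \<le> (\<integral>x. indicator A x * ((g x + \<alpha> * w x) * (v x - w x) * \<psi>l x) \<partial>lebesgue_on \<Omega>)"
    by (simp add: ac_simps)
qed

lemma chi_measurable: "u \<in> borel_measurable M \<Longrightarrow> chi u \<in> borel_measurable M"
proof -
  assume [measurable]: "u \<in> borel_measurable M"
  have "chi u = (\<lambda>x. if u x \<noteq> 0 then 1 else 0)" unfolding chi_def by (auto simp: indicator_def)
  then show ?thesis by simp
qed

lemma chi_range: "0 \<le> chi u x \<and> chi u x \<le> 1"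
  unfolding chi_def by (simp add: indicator_def)

lemma chi_eq_zero: "u x = 0 \<Longrightarrow> chi u x = 0"
  unfolding chi_def by simp

lemma IHT_seq_localized_first_order:
  assumes fm: "finite_measure (lebesgue_on \<Omega>)" and \<beta>: "\<beta> \<ge> 0" and sf: "standing_f \<Omega> f G Lf"
    and seq: "IHT_seq \<Omega> b f G \<alpha> \<beta> L u" and v: "v \<in> Uad \<Omega> b" and A: "A \<in> sets (lebesgue_on \<Omega>)"
  shows "0 \<le> (\<integral>x. indicator A x * chi (u (Suc k)) x
      * (G (u k) x + L * (u (Suc k) x - u k x) + \<alpha> * u (Suc k) x) * (v x - u (Suc k) x) \<partial>lebesgue_on \<Omega>)"
proof (rule iht_step_first_order[OF fm \<beta> _ _ IHT_seq_in_Uad[OF seq] IHT_seq_minimizes[OF seq] v])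
  have uL: "u j \<in> L2 \<Omega>" for j using Uad_subset_L2[OF IHT_seq_in_Uad[OF seq]] .
  then show "u k \<in> L2 \<Omega>" and "G (u k) \<in> L2 \<Omega>" using standing_f_grad_L2[OF sf] by auto
  have "chi (u (Suc k)) \<in> borel_measurable (lebesgue_on \<Omega>)"
    using uL unfolding L2_def by (auto intro: chi_measurable)
  then show "(\<lambda>x. indicator A x * chi (u (Suc k)) x) \<in> borel_measurable (lebesgue_on \<Omega>)"
    using A by measurable
  show "0 \<le> indicator A x * chi (u (Suc k)) x \<and> indicator A x * chi (u (Suc k)) x \<le> 1" for x
    using chi_range[of "u (Suc k)" x] by (simp add: indicator_def)
  show "indicator A x * chi (u (Suc k)) x = 0" if "u (Suc k) x = 0" for x
    using chi_eq_zero[of "u (Suc k)", OF that] by simp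
qed

lemma IHT_seq_shifted_subsequence:
  assumes fm: "finite_measure (lebesgue_on \<Omega>)" and sf: "standing_f \<Omega> f G Lf"
    and seq: "IHT_seq \<Omega> b f G \<alpha> \<beta> L u" and \<alpha>: "\<alpha> \<ge> 0" and \<beta>: "\<beta> \<ge> 0" and L: "L > Lf"
    and chiL: "integrable (lebesgue_on \<Omega>) chiL"
    and L1: "(\<lambda>k. \<integral>x. \<bar>chi (u k) x - chiL x\<bar> \<partial>lebesgue_on \<Omega>) \<longlonglongrightarrow> 0"
    and r: "strict_mono r" "weak_conv_L2 \<Omega> (u \<circ> r) ustar"
  obtains \<rho> where "weak_conv_L2 \<Omega> (\<lambda>j. u (\<rho> j)) ustar" "weak_conv_L2 \<Omega> (\<lambda>j. u (Suc (\<rho> j))) ustar"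
    "(\<lambda>j. norm2 \<Omega> (\<lambda>x. u (Suc (\<rho> j)) x - u (\<rho> j) x)) \<longlonglongrightarrow> 0"
    "AE x in lebesgue_on \<Omega>. (\<lambda>j. chi (u (Suc (\<rho> j))) x) \<longlonglongrightarrow> chiL x"
proof -
  have uL: "u k \<in> L2 \<Omega>" for k using Uad_subset_L2[OF IHT_seq_in_Uad[OF seq]] .
  have "integrable (lebesgue_on \<Omega>) (chi (u k))" for k
  proof (rule Bochner_Integration.integrable_bound)
    show "integrable (lebesgue_on \<Omega>) (\<lambda>x. 1::real)" using fm by (rule finite_measure.integrable_const)
    show "chi (u k) \<in> borel_measurable (lebesgue_on \<Omega>)"
      using uL unfolding L2_def by (auto intro: chi_measurable)
    show "AE x in lebesgue_on \<Omega>. norm (chi (u k) x) \<le> norm (1::real)"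
      using chi_range[of "u k"] by (intro AE_I2) (simp add: abs_le_iff)
  qed
  then have int: "integrable (lebesgue_on \<Omega>) (\<lambda>x. chi (u (Suc (r j))) x - chiL x)" for j
    using chiL by simp
  have "strict_mono (\<lambda>j. Suc (r j))" using r(1) by (simp add: strict_mono_def)
  from LIMSEQ_subseq_LIMSEQ[OF L1 this]
  have "(\<lambda>j. \<integral>x. norm (chi (u (Suc (r j))) x - chiL x) \<partial>lebesgue_on \<Omega>) \<longlonglongrightarrow> 0"
    by (simp add: o_def)
  then obtain s where s: "strict_mono s"
    and AE_s: "AE x in lebesgue_on \<Omega>. (\<lambda>j. chi (u (Suc (r (s j)))) x - chiL x) \<longlonglongrightarrow> 0"
    using tendsto_L1_AE_subseq[where u = "\<lambda>j x. chi (u (Suc (r j))) x - chiL x", OF int] by blast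
  define \<rho> where "\<rho> = r \<circ> s"
  have "strict_mono \<rho>" unfolding \<rho>_def using r(1) s by (rule strict_mono_o)
  have z: "weak_conv_L2 \<Omega> (\<lambda>j. u (\<rho> j)) ustar"
    using weak_conv_L2_subseq[OF r(2) s] unfolding \<rho>_def by (simp add: o_def)
  have d: "(\<lambda>j. norm2 \<Omega> (\<lambda>x. u (Suc (\<rho> j)) x - u (\<rho> j) x)) \<longlonglongrightarrow> 0"
    using LIMSEQ_subseq_LIMSEQ[OF IHT_seq_step_tendsto_zero[OF sf seq \<alpha> \<beta> L] \<open>strict_mono \<rho>\<close>]
    by (simp add: o_def)
  show thesis
  proof (rule that[OF z weak_conv_L2_perturb[OF z uL d]])
    show "AE x in lebesgue_on \<Omega>. (\<lambda>j. chi (u (Suc (\<rho> j))) x) \<longlonglongrightarrow> chiL x"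
      using AE_s unfolding \<rho>_def by eventually_elim (simp add: LIM_zero_iff)
  qed (rule d)
qed

lemma gradient_step_tendsto:
  assumes fm: "finite_measure (lebesgue_on \<Omega>)" and p: "p > 2" and sf: "standing_f \<Omega> f G Lf"
    and Gp: "\<And>v. v \<in> L2 \<Omega> \<Longrightarrow> G v \<in> Lp p \<Omega>"
    and cc: "\<And>z w. weak_conv_L2 \<Omega> z w \<Longrightarrow> (\<lambda>j. normp p \<Omega> (\<lambda>x. G (z j) x - G w x)) \<longlonglongrightarrow> 0"
    and z: "weak_conv_L2 \<Omega> z w" and y: "\<And>j. y j \<in> L2 \<Omega>"
    and d: "(\<lambda>j. norm2 \<Omega> (\<lambda>x. y j x - z j x)) \<longlonglongrightarrow> 0"
  shows "(\<lambda>j. norm2 \<Omega> (\<lambda>x. G (z j) x + L * (y j x - z j x) - G w x)) \<longlonglongrightarrow> 0"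
proof -
  have zL: "z j \<in> L2 \<Omega>" for j using z unfolding weak_conv_L2_def by blast
  have wL: "w \<in> L2 \<Omega>" using z unfolding weak_conv_L2_def by blast
  have "(\<lambda>j. norm2 \<Omega> (\<lambda>x. G (z j) x - G w x)) \<longlonglongrightarrow> 0"
    using zL wL p standing_f_grad_L2[OF sf] Gp
    by (intro norm2_tendsto_zero_if_normp_tendsto_zero[OF fm p _ _ cc[OF z]] L2_diff Lp_diff) auto
  moreover have "(\<lambda>j. norm2 \<Omega> (\<lambda>x. L * (y j x - z j x))) \<longlonglongrightarrow> 0"
    unfolding norm2_scale by (rule tendsto_mult_right_zero[OF d])
  ultimately have "(\<lambda>j. norm2 \<Omega> (\<lambda>x. (G (z j) x - G w x) + L * (y j x - z j x))) \<longlonglongrightarrow> 0"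
    using y zL wL standing_f_grad_L2[OF sf] by (intro norm2_tendsto_zero_add L2_diff L2_scale) auto
  then show ?thesis by (simp add: algebra_simps)
qed

theorem mainTheorem10:
  fixes \<Omega> :: "'a::euclidean_space set"
    and f :: "('a \<Rightarrow> real) \<Rightarrow> real" and G :: "('a \<Rightarrow> real) \<Rightarrow> ('a \<Rightarrow> real)"
    and \<alpha> \<beta> Lf L p :: real and b :: ereal
    and u :: "nat \<Rightarrow> 'a \<Rightarrow> real" and chiL ustar :: "'a \<Rightarrow> real"
  assumes "open \<Omega>" and "bounded \<Omega>"
    and "\<alpha> \<ge> 0" and "\<beta> > 0" and "b > 0"
    and "standing_f \<Omega> f G Lf"
    and "p > 2" and "L > Lf"
    and "\<forall>v\<in>L2 \<Omega>. G v \<in> Lp p \<Omega>"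
    and "\<forall>v w. weak_conv_L2 \<Omega> v w \<longrightarrow>
            (\<lambda>k. normp p \<Omega> (\<lambda>x. G (v k) x - G w x)) \<longlonglongrightarrow> 0"
    and "IHT_seq \<Omega> b f G \<alpha> \<beta> L u"
    and "\<exists>C. \<forall>k. u k \<in> Lp p \<Omega> \<and> normp p \<Omega> (u k) \<le> C"
    and "chiL \<in> borel_measurable (lebesgue_on \<Omega>)"
    and "integrable (lebesgue_on \<Omega>) chiL"
    and "(\<lambda>k. \<integral>x. \<bar>chi (u k) x - chiL x\<bar> \<partial>(lebesgue_on \<Omega>)) \<longlonglongrightarrow> 0"
    and "ustar \<in> Uad \<Omega> b"
    and "\<exists>r. strict_mono r \<and> weak_conv_L2 \<Omega> (u \<circ> r) ustar"
  shows "\<forall>v\<in>Uad \<Omega> b \<inter> Lp p \<Omega>. AE x in lebesgue_on \<Omega>.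
           (G ustar x + \<alpha> * ustar x) * (v x - ustar x) * chiL x \<ge> 0"
proof -
  note sf = assms(6) and seq = assms(11)
  have fm: "finite_measure (lebesgue_on \<Omega>)"
    using assms(1,2) by (intro finite_measure_lebesgue_on_bounded) auto
  have \<beta>: "\<beta> \<ge> 0" using assms(4) by simp
  have uL: "u k \<in> L2 \<Omega>" for k using Uad_subset_L2[OF IHT_seq_in_Uad[OF seq]] .
  have GL: "G ustar \<in> L2 \<Omega>" using standing_f_grad_L2[OF sf Uad_subset_L2[OF assms(16)]] .
  obtain r where r: "strict_mono r" "weak_conv_L2 \<Omega> (u \<circ> r) ustar" using assms(17) by blast
  obtain \<rho> where z: "weak_conv_L2 \<Omega> (\<lambda>j. u (\<rho> j)) ustar"
    and y: "weak_conv_L2 \<Omega> (\<lambda>j. u (Suc (\<rho> j))) ustar"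
    and d: "(\<lambda>j. norm2 \<Omega> (\<lambda>x. u (Suc (\<rho> j)) x - u (\<rho> j) x)) \<longlonglongrightarrow> 0"
    and chi_lim: "AE x in lebesgue_on \<Omega>. (\<lambda>j. chi (u (Suc (\<rho> j))) x) \<longlonglongrightarrow> chiL x"
    by (rule IHT_seq_shifted_subsequence[OF fm sf seq assms(3) \<beta> assms(8,14,15) r])
  obtain C where C: "\<And>k. u k \<in> Lp p \<Omega> \<and> normp p \<Omega> (u k) \<le> C" using assms(12) by blast
  have B: "norm2 \<Omega> (u (Suc (\<rho> j))) \<le> sqrt (measure (lebesgue_on \<Omega>) \<Omega> + C powr p)" for j
    using C uL by (intro norm2_le_if_normp_le[OF fm assms(7)]) auto
  have qL: "(\<lambda>x. G (u (\<rho> j)) x + L * (u (Suc (\<rho> j)) x - u (\<rho> j) x)) \<in> L2 \<Omega>" for j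
    using uL standing_f_grad_L2[OF sf] by (intro L2_add L2_scale L2_diff) auto
  have q: "(\<lambda>j. norm2 \<Omega> (\<lambda>x. G (u (\<rho> j)) x + L * (u (Suc (\<rho> j)) x - u (\<rho> j) x) - G ustar x))
      \<longlonglongrightarrow> 0"
    using assms(9,10) by (intro gradient_step_tendsto[OF fm assms(7) sf _ _ z uL d]) auto
  have chi_meas: "chi (u k) \<in> borel_measurable (lebesgue_on \<Omega>)" for k
    using uL unfolding L2_def by (auto intro: chi_measurable)
  show ?thesis
  proof
    \<comment> \<open>only \<open>v \<in> U\<^sub>a\<^sub>d\<close> is used: every pairing takes place in \<open>L\<^sup>2\<close>\<close>
    fix v assume "v \<in> Uad \<Omega> b \<inter> Lp p \<Omega>"
    then have v: "v \<in> Uad \<Omega> b" by simp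
    show "AE x in lebesgue_on \<Omega>. (G ustar x + \<alpha> * ustar x) * (v x - ustar x) * chiL x \<ge> 0"
      by (rule variational_inequality_limit_AE[OF y B qL GL q chi_meas chi_range assms(13) chi_lim
            Uad_subset_L2[OF v] assms(3) IHT_seq_localized_first_order[OF fm \<beta> sf seq v]])
  qed
qed

end
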